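(* Let $d\ge 1$ and let $(f_0, f_1, \ldots, f_{d-1})$ be a finite sequence of integers with $f_i > 0$ for all $i$. Put $f_{-1}=1$. The following conditions are equivalent: (i) there is a pure quasi-forest $\Delta$ of dimension $d-1$ with $f(\Delta) = (f_0, \ldots, f_{d-1})$; (ii) there is a pure forest $\Delta$ of dimension $d-1$ with $f(\Delta) = (f_0, \ldots, f_{d-1})$; (iii) the integers $c_0,\ldots,c_d$ defined by $\sum_{i=0}^{d} f_{i-1}(x-1)^{i} = \sum_{i=0}^{d} c_i x^i$ satisfy $\sum_{i=k}^{d} c_i > 0$ for each $1 \le k \le d$ and $c_i \le 0$ for each $1 \le i < d$; (iv) the integers $b_1,\ldots,b_d$ defined by $\sum_{i=1}^{d} f_{i-1}(x-1)^{i-1} = \sum_{i=1}^{d} b_i x^{i-1}$ satisfy $0 < b_1 \le b_2 \le \cdots \le b_d$.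
   Context: A simplicial complex $\Delta$ on $[n]=\{1,\ldots,n\}$ is a collection of subsets of $[n]$ such that $\{i\}\in\Delta$ for every $i\in[n]$ and $G\subset F\in\Delta$ implies $G\in\Delta$. If $d=\max\{|F|:F\in\Delta\}$, then $\dim\Delta=d-1$. Facets are maximal faces; $\Delta$ is pure if all facets have the same cardinality. The $f$-vector is $f(\Delta)=(f_0,\ldots,f_{d-1})$, where $f_i$ is the number of faces with $i+1$ elements. For facets $F_{i_1},\ldots,F_{i_q}$, $\langle F_{i_1},\ldots,F_{i_q}\rangle$ denotes the subcomplex of all faces contained in some $F_{i_j}$. A facet $F$ of $\Delta$ is a leaf if there is a facet $G\neq F$ (a branch of $F$) with $H\cap F\subset G\cap F$ for all facets $H\neq F$. A quasi-forest is a simplicial complex whose facets admit an ordering $F_1,\ldots,F_s$ (a leaf order) such that for each $1<j\le s$, $F_j$ is a leaf of $\langle F_1,\ldots,F_j\rangle$. A forest is a simplicial complex such that for every nonempty subset $\{F_{i_1},\ldots,F_{i_q}\}$ of its facets, $\langle F_{i_1},\ldots,F_{i_q}\rangle$ has a leaf. (A complex with a single facet is regarded as a quasi-forest and forest.) *)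

theory Defs
  imports "HOL-Computational_Algebra.Polynomial"
begin

definition simplicial_complex :: "nat \<Rightarrow> nat set set \<Rightarrow> bool" where
  "simplicial_complex n \<Delta> \<longleftrightarrow>
     (\<forall>F\<in>\<Delta>. F \<subseteq> {1..n}) \<and>
     (\<forall>i\<in>{1..n}. {i} \<in> \<Delta>) \<and>
     (\<forall>F\<in>\<Delta>. \<forall>G. G \<subseteq> F \<longrightarrow> G \<in> \<Delta>)"

definition facets :: "'a set set \<Rightarrow> 'a set set" where
  "facets \<Delta> = {F \<in> \<Delta>. \<forall>G\<in>\<Delta>. F \<subseteq> G \<longrightarrow> G = F}"

definition pure :: "'a set set \<Rightarrow> bool" where
  "pure \<Delta> \<longleftrightarrow> (\<forall>F\<in>facets \<Delta>. \<forall>G\<in>facets \<Delta>. card F = card G)"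

text \<open>dim \<Delta> = d - 1 where d is the maximal cardinality of a face; we state
  it via d = max face cardinality.\<close>
definition max_face_card :: "'a set set \<Rightarrow> nat" where
  "max_face_card \<Delta> = Max (card ` \<Delta>)"

definition fnum :: "'a set set \<Rightarrow> nat \<Rightarrow> nat" where
  "fnum \<Delta> i = card {F \<in> \<Delta>. card F = i + 1}"

definition gen_complex :: "'a set set \<Rightarrow> 'a set set" where
  "gen_complex S = {G. \<exists>F\<in>S. G \<subseteq> F}"

definition is_leaf :: "'a set set \<Rightarrow> 'a set \<Rightarrow> bool" where
  "is_leaf \<Delta> F \<longleftrightarrow> F \<in> facets \<Delta> \<and>
     (\<exists>G\<in>facets \<Delta>. G \<noteq> F \<and> (\<forall>H\<in>facets \<Delta>. H \<noteq> F \<longrightarrow> H \<inter> F \<subseteq> G \<inter> F))"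

text \<open>Quasi-forest: there is a leaf order of the facets. With one facet the
  condition is vacuous, matching the convention.\<close>
definition quasi_forest :: "'a set set \<Rightarrow> bool" where
  "quasi_forest \<Delta> \<longleftrightarrow>
     (\<exists>L. distinct L \<and> set L = facets \<Delta> \<and>
        (\<forall>j. 1 < j \<and> j \<le> length L \<longrightarrow>
              is_leaf (gen_complex (set (take j L))) (L ! (j - 1))))"

text \<open>Forest: every nonempty set of facets generates a subcomplex with a leaf
  (a subcomplex with a single facet counts as having one, by convention).\<close>
definition forest :: "'a set set \<Rightarrow> bool" where
  "forest \<Delta> \<longleftrightarrow>
     (\<forall>S. S \<subseteq> facets \<Delta> \<and> S \<noteq> {} \<longrightarrow>
        card (facets (gen_complex S)) = 1 \<or> (\<exists>F. is_leaf (gen_complex S) F))"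

definition fm1 :: "(nat \<Rightarrow> int) \<Rightarrow> nat \<Rightarrow> int" where
  "fm1 f i = (if i = 0 then 1 else f (i - 1))"

definition c_poly :: "nat \<Rightarrow> (nat \<Rightarrow> int) \<Rightarrow> int poly" where
  "c_poly d f = (\<Sum>i = 0..d. smult (fm1 f i) ([:-1, 1:] ^ i))"

definition b_poly :: "nat \<Rightarrow> (nat \<Rightarrow> int) \<Rightarrow> int poly" where
  "b_poly d f = (\<Sum>i = 1..d. smult (f (i - 1)) ([:-1, 1:] ^ (i - 1)))"

definition realizes :: "nat \<Rightarrow> (nat \<Rightarrow> int) \<Rightarrow> nat set set \<Rightarrow> bool" where
  "realizes d f \<Delta> \<longleftrightarrow> max_face_card \<Delta> = d \<and> (\<forall>i<d. int (fnum \<Delta> i) = f i)"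

end

theory Submission
  imports Defs
begin

text \<open>Encode a complex \<Delta> by its face polynomial, the sum of (x - 1)^|A| over all faces A: it
  is the sum of f_(i-1) (x - 1)^i, i.e. c_poly, and on a full simplex on B it collapses to x^|B|.
  By inclusion-exclusion, attaching a facet F along a face B of the facets before it adds
  x^|F| - x^|B|. Along a leaf order of a pure quasi-forest with facets of size d, each leaf meets
  the earlier facets in a single face of some size a < d, so the face polynomial is
  x^d + \<Sum>(x^d - x^a) over a multiset of such a. Conversely every such polynomial is the face
  polynomial of a forest obtained by gluing d-sets onto a base simplex along initial segments
  of it, and every forest is a quasi-forest, since peeling off leaves one at a time gives a leaf
  order. Among polynomials of degree at most d with value 1 at x = 1, such as c_poly, those of
  this shape are exactly the ones whose coefficients below degree d are nonpositive, and this is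
  condition (iii); finally c_poly = 1 + (x - 1) b_poly turns the conditions on the c_i into
  those on the b_i.\<close>

section \<open>Face polynomials\<close>

definition face_poly :: "'a set set \<Rightarrow> int poly" where
  "face_poly \<Delta> = (\<Sum>A\<in>\<Delta>. [:-1, 1:] ^ card A)"

lemma sum_Pow_power_card:
  fixes p :: "'b::comm_semiring_1"
  assumes "finite B"
  shows "(\<Sum>A\<in>Pow B. p ^ card A) = (p + 1) ^ card B"
  using prod_add[OF assms, of "\<lambda>_. p" "\<lambda>_. 1"] by simp

lemma face_poly_Pow:
  assumes "finite B"
  shows "face_poly (Pow B) = monom 1 (card B)"
proof -
  have "[:-1, 1:] + 1 = (monom 1 1 :: int poly)"
    by (simp add: monom_Suc one_pCons)
  then show ?thesis
    using assms by (simp add: face_poly_def sum_Pow_power_card monom_power)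
qed

lemma gen_complex_insert: "gen_complex (insert F S) = gen_complex S \<union> Pow F"
  unfolding gen_complex_def by auto

lemma finite_gen_complex:
  assumes "finite S" "\<forall>F\<in>S. finite F"
  shows "finite (gen_complex S)"
proof -
  have "gen_complex S = (\<Union>F\<in>S. Pow F)"
    unfolding gen_complex_def by auto
  then show ?thesis
    using assms by simp
qed

lemma face_poly_glue:
  assumes "finite S" "\<forall>H\<in>S. finite H" "finite F" "gen_complex S \<inter> Pow F = Pow B"
  shows "face_poly (gen_complex (insert F S)) =
    face_poly (gen_complex S) + monom 1 (card F) - monom 1 (card B)"
proof -
  have "B \<subseteq> F"
    using assms(4) by blast
  then have "finite B"
    using assms(3) finite_subset by blast
  have "face_poly (gen_complex S \<union> Pow F) =
      face_poly (gen_complex S) + face_poly (Pow F) - face_poly (gen_complex S \<inter> Pow F)"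
    unfolding face_poly_def
    by (subst sum_Un) (use assms finite_gen_complex in auto)
  then show ?thesis
    using assms(3,4) \<open>finite B\<close> by (simp add: gen_complex_insert face_poly_Pow)
qed

lemma face_poly_eq_c_poly_fnum:
  assumes "finite \<Delta>" "\<forall>A\<in>\<Delta>. finite A" "{} \<in> \<Delta>" "\<forall>A\<in>\<Delta>. card A \<le> d"
  shows "face_poly \<Delta> = c_poly d (\<lambda>i. int (fnum \<Delta> i))"
proof -
  have "face_poly \<Delta> = (\<Sum>i = 0..d. \<Sum>A\<in>{A \<in> \<Delta>. card A = i}. [:-1, 1:] ^ card A)"
    unfolding face_poly_def by (rule sum.group[symmetric]) (use assms in auto)
  also have "\<dots> = (\<Sum>i = 0..d. smult (int (card {A \<in> \<Delta>. card A = i})) ([:-1, 1:] ^ i))"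
    by (simp add: of_nat_poly)
  also have "\<dots> = c_poly d (\<lambda>i. int (fnum \<Delta> i))"
  proof -
    have "{A \<in> \<Delta>. card A = 0} = {{}}"
      using assms(2,3) by auto
    then have "int (card {A \<in> \<Delta>. card A = i}) = fm1 (\<lambda>i. int (fnum \<Delta> i)) i" for i
      by (simp add: fm1_def fnum_def)
    then show ?thesis
      by (simp add: c_poly_def)
  qed
  finally show ?thesis .
qed

lemma pcompose_power: "pcompose (p ^ n) q = pcompose p q ^ n"
  by (induction n) (simp_all add: pcompose_1 pcompose_mult)

lemma c_poly_eq_iff: "c_poly d f = c_poly d g \<longleftrightarrow> (\<forall>i<d. f i = g i)"
proof
  have "pcompose ([:-1, 1:] :: int poly) [:1, 1:] = monom 1 1"
    by (simp add: pcompose_pCons monom_Suc one_pCons)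
  then have "pcompose (c_poly d h) [:1, 1:] = (\<Sum>i = 0..d. monom (fm1 h i) i)" for h
    by (simp add: c_poly_def pcompose_sum pcompose_smult pcompose_power monom_power smult_monom)
  then have coeff_shift: "coeff (pcompose (c_poly d h) [:1, 1:]) (Suc i) = h i" if "i < d" for h i
    using that by (simp add: coeff_sum fm1_def)
  show "c_poly d f = c_poly d g \<Longrightarrow> \<forall>i<d. f i = g i"
    using coeff_shift by metis
  show "\<forall>i<d. f i = g i \<Longrightarrow> c_poly d f = c_poly d g"
    unfolding c_poly_def fm1_def by (intro sum.cong) auto
qed

lemma degree_c_poly_le: "degree (c_poly d f) \<le> d"
  unfolding c_poly_def
proof (rule degree_sum_le)
  fix i assume "i \<in> {0..d}"
  then show "degree (smult (fm1 f i) ([:-1, 1:] ^ i)) \<le> d"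
    using degree_power_le[of "[:-1, 1:] :: int poly" i] degree_smult_le order_trans by fastforce
qed simp

lemma poly_c_poly_1: "poly (c_poly d f) 1 = 1"
proof -
  have "poly (c_poly d f) 1 = (\<Sum>i = 0..d. fm1 f i * 0 ^ i)"
    by (simp add: c_poly_def poly_sum)
  also have "\<dots> = fm1 f 0"
    by (simp add: zero_power sum.atLeast_Suc_atMost)
  finally show ?thesis
    by (simp add: fm1_def)
qed

section \<open>Polynomials of glued simplices\<close>

definition glue_poly :: "nat \<Rightarrow> nat multiset \<Rightarrow> int poly" where
  "glue_poly d M = monom 1 d + (\<Sum>a\<in>#M. monom 1 d - monom 1 a)"

lemma glue_poly_add_mset: "glue_poly d (add_mset a M) = glue_poly d M + monom 1 d - monom 1 a"
  by (simp add: glue_poly_def)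

lemma poly_glue_poly_1: "poly (glue_poly d M) 1 = 1"
  by (simp add: glue_poly_def poly_sum_mset poly_monom)

lemma coeff_glue_poly: "i \<noteq> d \<Longrightarrow> coeff (glue_poly d M) i = - int (count M i)"
  by (induction M) (simp_all add: glue_poly_def[of _ "{#}"] glue_poly_add_mset)

lemma poly_1_eq_sum_coeff:
  fixes p :: "'a::comm_semiring_1 poly"
  assumes "degree p \<le> d"
  shows "poly p 1 = (\<Sum>i\<le>d. coeff p i)"
proof -
  have "poly p 1 = (\<Sum>i\<le>degree p. coeff p i)"
    by (simp add: poly_altdef)
  also have "\<dots> = (\<Sum>i\<le>d. coeff p i)"
    by (rule sum.mono_neutral_left) (use assms in \<open>auto simp: coeff_eq_0\<close>)
  finally show ?thesis .
qed

lemma poly_eqI_lower_coeffs: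
  fixes p q :: "'a::comm_ring_1 poly"
  assumes "degree p \<le> d" "degree q \<le> d" "poly p 1 = poly q 1" "\<forall>i<d. coeff p i = coeff q i"
  shows "p = q"
proof (rule poly_eqI)
  fix i
  have split: "poly r 1 = (\<Sum>i<d. coeff r i) + coeff r d" if "degree r \<le> d" for r :: "'a poly"
    using poly_1_eq_sum_coeff[OF that] by (simp add: lessThan_Suc_atMost[symmetric])
  have "(\<Sum>i<d. coeff p i) = (\<Sum>i<d. coeff q i)"
    using assms(4) by simp
  then have "coeff p d = coeff q d"
    using split[OF assms(1)] split[OF assms(2)] assms(3) by simp
  then show "coeff p i = coeff q i"
    using assms by (cases i d rule: linorder_cases) (auto simp: coeff_eq_0)
qed

lemma glue_poly_iff_coeff_conditions:
  fixes p :: "int poly"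
  assumes "d \<ge> 1" "degree p \<le> d" "poly p 1 = 1"
  shows "(\<exists>M. (\<forall>a\<in>#M. a < d) \<and> p = glue_poly d M) \<longleftrightarrow>
    (\<forall>k\<in>{1..d}. (\<Sum>i = k..d. coeff p i) > 0) \<and> (\<forall>i. 1 \<le> i \<and> i < d \<longrightarrow> coeff p i \<le> 0)"
proof -
  have tail: "(\<Sum>i = k..d. coeff p i) = 1 - (\<Sum>i<k. coeff p i)" if "k \<le> d" for k
  proof -
    have "{..d} = {..<k} \<union> {k..d}" "{..<k} \<inter> {k..d} = {}"
      using that by auto
    then have "(\<Sum>i\<le>d. coeff p i) = (\<Sum>i<k. coeff p i) + (\<Sum>i = k..d. coeff p i)"
      by (simp add: sum.union_disjoint)
    then show ?thesis
      using poly_1_eq_sum_coeff[OF assms(2)] assms(3) by simp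
  qed
  show ?thesis
  proof
    assume "\<exists>M. (\<forall>a\<in>#M. a < d) \<and> p = glue_poly d M"
    then obtain M where "p = glue_poly d M"
      by blast
    then have nonpos: "coeff p i \<le> 0" if "i < d" for i
      using that by (simp add: coeff_glue_poly)
    have "(\<Sum>i = k..d. coeff p i) > 0" if "k \<in> {1..d}" for k
      using that tail[of k] sum_nonpos[of "{..<k}" "coeff p"] nonpos by auto
    then show "(\<forall>k\<in>{1..d}. (\<Sum>i = k..d. coeff p i) > 0) \<and> (\<forall>i. 1 \<le> i \<and> i < d \<longrightarrow> coeff p i \<le> 0)"
      using nonpos by auto
  next
    assume conds: "(\<forall>k\<in>{1..d}. (\<Sum>i = k..d. coeff p i) > 0) \<and> (\<forall>i. 1 \<le> i \<and> i < d \<longrightarrow> coeff p i \<le> 0)"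
    have "(\<Sum>i = 1..d. coeff p i) > 0"
      using conds assms(1) by simp
    then have "coeff p 0 \<le> 0"
      using tail[of 1] assms(1) by simp
    then have nonpos: "coeff p i \<le> 0" if "i < d" for i
      using conds that by (cases "i = 0") auto
    define M where "M = (\<Sum>i<d. replicate_mset (nat (- coeff p i)) i)"
    have count_M: "count M i = (if i < d then nat (- coeff p i) else 0)" for i
      by (simp add: M_def count_sum)
    have "degree (glue_poly d M) \<le> d"
      by (rule degree_le) (simp add: coeff_glue_poly count_M)
    then have "p = glue_poly d M"
      using assms(2,3) nonpos
      by (intro poly_eqI_lower_coeffs[of _ d]) (auto simp: poly_glue_poly_1 coeff_glue_poly count_M)
    moreover have "\<forall>a\<in>#M. a < d"
      using count_M by (metis count_eq_zero_iff)
    ultimately show "\<exists>M. (\<forall>a\<in>#M. a < d) \<and> p = glue_poly d M"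
      by blast
  qed
qed

lemma c_poly_eq_1_plus_b_poly: "c_poly d f = 1 + [:-1, 1:] * b_poly d f"
proof -
  have "(\<Sum>i = Suc 0..d. smult (fm1 f i) ([:-1, 1:] ^ i)) =
      (\<Sum>i = 1..d. [:-1, 1:] * smult (f (i - 1)) ([:-1, 1:] ^ (i - 1)))"
  proof (rule sum.cong)
    fix i assume i: "i \<in> {1..d}"
    then have "([:-1, 1:] :: int poly) ^ i = [:-1, 1:] * [:-1, 1:] ^ (i - 1)"
      by (simp flip: power_Suc)
    then show "smult (fm1 f i) ([:-1, 1:] ^ i) = [:-1, 1:] * smult (f (i - 1)) ([:-1, 1:] ^ (i - 1))"
      using i by (simp add: fm1_def mult_smult_right)
  qed simp
  then show ?thesis
    by (simp add: c_poly_def b_poly_def sum.atLeast_Suc_atMost sum_distrib_left fm1_def)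
qed

lemma degree_b_poly_le: "degree (b_poly d f) \<le> d - 1"
  unfolding b_poly_def
proof (rule degree_sum_le)
  fix i assume "i \<in> {1..d}"
  then show "degree (smult (f (i - 1)) ([:-1, 1:] ^ (i - 1))) \<le> d - 1"
    using degree_power_le[of "[:-1, 1:] :: int poly" "i - 1"] degree_smult_le order_trans
    by fastforce
qed simp

lemma sum_coeff_c_poly_tail:
  assumes "1 \<le> k" "k \<le> d"
  shows "(\<Sum>i = k..d. coeff (c_poly d f) i) = coeff (b_poly d f) (k - 1)"
proof -
  let ?b = "\<lambda>i. coeff (b_poly d f) i"
  have "(\<Sum>i = k..d. coeff (c_poly d f) i) = (\<Sum>i = k..d. ?b (i - 1) - ?b i)"
    using assms(1) by (intro sum.cong) (auto simp: c_poly_eq_1_plus_b_poly coeff_pCons')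
  also have "\<dots> = ?b (k - 1) - ?b d"
    using sum_telescope''[of "k - 1" d "\<lambda>i. - ?b i"] assms by (simp add: Suc_pred')
  also have "?b d = 0"
    using degree_b_poly_le[of d f] assms by (intro coeff_eq_0) simp
  finally show ?thesis
    by simp
qed

lemma c_poly_conditions_iff_b_poly_mono:
  assumes "d \<ge> 1"
  shows "((\<forall>k\<in>{1..d}. (\<Sum>i = k..d. coeff (c_poly d f) i) > 0) \<and>
          (\<forall>i. 1 \<le> i \<and> i < d \<longrightarrow> coeff (c_poly d f) i \<le> 0)) \<longleftrightarrow>
    (0 < coeff (b_poly d f) 0 \<and>
     (\<forall>i. 1 \<le> i \<and> i < d \<longrightarrow> coeff (b_poly d f) (i - 1) \<le> coeff (b_poly d f) i))"
proof -
  let ?b = "\<lambda>i. coeff (b_poly d f) i"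
  have coeff_c: "coeff (c_poly d f) i = ?b (i - 1) - ?b i" if "1 \<le> i" for i
    using that by (simp add: c_poly_eq_1_plus_b_poly coeff_pCons')
  have "(\<forall>k\<in>{1..d}. ?b (k - 1) > 0) \<longleftrightarrow> 0 < ?b 0"
    if mono: "\<forall>i. 1 \<le> i \<and> i < d \<longrightarrow> ?b (i - 1) \<le> ?b i"
  proof -
    have chain: "?b 0 \<le> ?b j" if "j < d" for j
      using that by (induction j) (use mono in \<open>fastforce+\<close>)
    have lower: "?b 0 \<le> ?b (k - 1)" if "k \<in> {1..d}" for k
      using that by (intro chain) auto
    show ?thesis
    proof
      assume "\<forall>k\<in>{1..d}. ?b (k - 1) > 0"
      moreover have "1 \<in> {1..d}"
        using assms by simp
      ultimately show "0 < ?b 0"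
        by (metis diff_self_eq_0)
    qed (use lower in \<open>meson less_le_trans\<close>)
  qed
  then show ?thesis
    using sum_coeff_c_poly_tail[of _ d f] coeff_c by auto
qed

section \<open>Facets and leaf orders\<close>

lemma facets_gen_complex:
  assumes "\<forall>F\<in>S. \<forall>G\<in>S. F \<subseteq> G \<longrightarrow> F = G"
  shows "facets (gen_complex S) = S"
proof
  show "facets (gen_complex S) \<subseteq> S"
  proof
    fix M assume "M \<in> facets (gen_complex S)"
    then obtain F where "F \<in> S" "M \<subseteq> F" "\<forall>G\<in>gen_complex S. M \<subseteq> G \<longrightarrow> G = M"
      unfolding facets_def gen_complex_def by auto
    moreover have "F \<in> gen_complex S"
      using \<open>F \<in> S\<close> unfolding gen_complex_def by auto
    ultimately show "M \<in> S"
      by metis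
  qed
  show "S \<subseteq> facets (gen_complex S)"
  proof
    fix F assume "F \<in> S"
    have "G = F" if G: "G \<in> gen_complex S" "F \<subseteq> G" for G
    proof -
      obtain H where "H \<in> S" "G \<subseteq> H"
        using G(1) unfolding gen_complex_def by auto
      moreover from this have "F = H"
        using assms \<open>F \<in> S\<close> G(2) by (meson order_trans)
      ultimately show "G = F"
        using G(2) by simp
    qed
    then show "F \<in> facets (gen_complex S)"
      using \<open>F \<in> S\<close> unfolding facets_def gen_complex_def by auto
  qed
qed

lemma facets_gen_complex_card:
  assumes "\<forall>F\<in>S. finite F \<and> card F = d"
  shows "facets (gen_complex S) = S"
  using assms by (intro facets_gen_complex) (metis card_subset_eq)

lemma face_subset_facet:
  assumes "finite \<Delta>" "A \<in> \<Delta>"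
  shows "\<exists>F\<in>facets \<Delta>. A \<subseteq> F"
proof -
  obtain F where "F \<in> \<Delta>" "A \<subseteq> F" "\<forall>G\<in>\<Delta>. F \<subseteq> G \<longrightarrow> F = G"
    using finite_has_maximal2[OF assms] by blast
  then show ?thesis
    unfolding facets_def by auto
qed

lemma gen_complex_facets:
  assumes "finite \<Delta>" "\<forall>F\<in>\<Delta>. \<forall>G. G \<subseteq> F \<longrightarrow> G \<in> \<Delta>"
  shows "gen_complex (facets \<Delta>) = \<Delta>"
proof
  show "gen_complex (facets \<Delta>) \<subseteq> \<Delta>"
    using assms(2) unfolding gen_complex_def facets_def by auto
  show "\<Delta> \<subseteq> gen_complex (facets \<Delta>)"
    using face_subset_facet[OF assms(1)] unfolding gen_complex_def by auto
qed

lemma simplicial_complex_finite: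
  assumes "simplicial_complex n \<Delta>"
  shows "finite \<Delta>" "\<forall>A\<in>\<Delta>. finite A"
proof -
  have "\<forall>F\<in>\<Delta>. F \<subseteq> {1..n}"
    using assms by (simp add: simplicial_complex_def)
  then have sub: "\<Delta> \<subseteq> Pow {1..n}"
    by auto
  then show "finite \<Delta>"
    by (rule finite_subset) simp
  show "\<forall>A\<in>\<Delta>. finite A"
    using sub by (meson PowD finite_atLeastAtMost finite_subset subsetD)
qed

lemma simplicial_complex_gen_complex:
  assumes "\<Union>S = {1..n}"
  shows "simplicial_complex n (gen_complex S)"
  using assms unfolding simplicial_complex_def gen_complex_def by blast

lemma card_facet_pure:
  assumes "finite \<Delta>" "\<forall>A\<in>\<Delta>. finite A" "pure \<Delta>" "F \<in> facets \<Delta>"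
  shows "card F = max_face_card \<Delta>"
proof -
  have "\<Delta> \<noteq> {}"
    using assms(4) unfolding facets_def by blast
  then have "max_face_card \<Delta> \<in> card ` \<Delta>"
    unfolding max_face_card_def using assms(1) by simp
  then obtain A where A: "A \<in> \<Delta>" "card A = max_face_card \<Delta>"
    by auto
  obtain G where G: "G \<in> facets \<Delta>" "A \<subseteq> G"
    using face_subset_facet[OF assms(1) A(1)] by blast
  have "card G \<le> max_face_card \<Delta>"
    using G(1) assms(1) unfolding facets_def max_face_card_def by simp
  moreover have "card A \<le> card G"
    using G assms(2) unfolding facets_def by (simp add: card_mono)
  ultimately have "card G = max_face_card \<Delta>"
    using A(2) by simp
  then show ?thesis
    using assms(3,4) G(1) unfolding pure_def by metis
qed

definition leaf_order :: "'a set list \<Rightarrow> bool" where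
  "leaf_order L \<longleftrightarrow>
     (\<forall>j. 1 < j \<and> j \<le> length L \<longrightarrow> is_leaf (gen_complex (set (take j L))) (L ! (j - 1)))"

lemma quasi_forest_iff_leaf_order:
  "quasi_forest \<Delta> \<longleftrightarrow> (\<exists>L. distinct L \<and> set L = facets \<Delta> \<and> leaf_order L)"
  unfolding quasi_forest_def leaf_order_def ..

lemma leaf_order_singleton: "leaf_order [F]"
  by (auto simp: leaf_order_def)

lemma leaf_order_snoc:
  "leaf_order (L @ [F]) \<longleftrightarrow>
     leaf_order L \<and> (L \<noteq> [] \<longrightarrow> is_leaf (gen_complex (insert F (set L))) F)"
proof -
  have prefix: "take j (L @ [F]) = take j L" "(L @ [F]) ! (j - 1) = L ! (j - 1)"
    if "1 < j" "j \<le> length L" for j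
    using that by (auto simp: nth_append)
  have last: "set (take (length L + 1) (L @ [F])) = insert F (set L)"
    "(L @ [F]) ! (length L + 1 - 1) = F"
    by simp_all
  show ?thesis
  proof
    assume snoc: "leaf_order (L @ [F])"
    note snoc_at = snoc[unfolded leaf_order_def, rule_format]
    have "leaf_order L"
      unfolding leaf_order_def
    proof (intro allI impI)
      fix j assume j: "1 < j \<and> j \<le> length L"
      then have "is_leaf (gen_complex (set (take j (L @ [F])))) ((L @ [F]) ! (j - 1))"
        by (intro snoc_at) simp
      then show "is_leaf (gen_complex (set (take j L))) (L ! (j - 1))"
        using j prefix by simp
    qed
    moreover have "is_leaf (gen_complex (insert F (set L))) F" if "L \<noteq> []"
    proof -
      have "is_leaf (gen_complex (set (take (length L + 1) (L @ [F])))) ((L @ [F]) ! (length L + 1 - 1))"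
        using that by (intro snoc_at) simp
      then show ?thesis
        unfolding last .
    qed
    ultimately show "leaf_order L \<and> (L \<noteq> [] \<longrightarrow> is_leaf (gen_complex (insert F (set L))) F)"
      by blast
  next
    assume *: "leaf_order L \<and> (L \<noteq> [] \<longrightarrow> is_leaf (gen_complex (insert F (set L))) F)"
    show "leaf_order (L @ [F])"
      unfolding leaf_order_def
    proof (intro allI impI)
      fix j assume j: "1 < j \<and> j \<le> length (L @ [F])"
      show "is_leaf (gen_complex (set (take j (L @ [F])))) ((L @ [F]) ! (j - 1))"
      proof (cases "j \<le> length L")
        case True
        then show ?thesis
          using * j prefix unfolding leaf_order_def by simp
      next
        case False
        then have "j = length L + 1" "L \<noteq> []"
          using j by auto
        then show ?thesis
          using * last by simp
      qed
    qed
  qed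
qed

lemma forest_imp_quasi_forest:
  assumes "forest \<Delta>" "finite \<Delta>"
  shows "quasi_forest \<Delta>"
proof -
  have "finite (facets \<Delta>)"
    using assms(2) unfolding facets_def by simp
  then have "\<exists>L. distinct L \<and> set L = facets \<Delta> \<and> leaf_order L"
  proof (induction rule: finite_remove_induct)
    case empty
    show ?case
      by (intro exI[of _ "[]"]) (simp add: leaf_order_def)
  next
    case (remove S)
    have facets_S: "facets (gen_complex S) = S"
      using remove.hyps(3) by (intro facets_gen_complex) (auto simp: facets_def)
    show ?case
    proof (cases "card S = 1")
      case True
      then obtain F where "S = {F}"
        by (auto simp: card_1_singleton_iff)
      then show ?thesis
        by (intro exI[of _ "[F]"]) (simp add: leaf_order_singleton)
    next
      case False
      then obtain F where leaf: "is_leaf (gen_complex S) F"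
        using assms(1) remove.hyps(2,3) facets_S unfolding forest_def by metis
      then have "F \<in> S"
        using facets_S unfolding is_leaf_def by simp
      obtain L where L: "distinct L" "set L = S - {F}" "leaf_order L"
        using remove.IH[OF \<open>F \<in> S\<close>] by blast
      have "L \<noteq> []"
      proof
        assume "L = []"
        then have "S = {F}"
          using L(2) \<open>F \<in> S\<close> by auto
        then show False
          using False by simp
      qed
      moreover have "insert F (set L) = S"
        using L(2) \<open>F \<in> S\<close> by blast
      ultimately have "distinct (L @ [F]) \<and> set (L @ [F]) = S \<and> leaf_order (L @ [F])"
        using L leaf by (simp add: leaf_order_snoc)
      then show ?thesis
        by blast
    qed
  qed
  then show ?thesis
    unfolding quasi_forest_iff_leaf_order by blast
qed

lemma leaf_meets_rest_in_simplex:
  assumes "is_leaf (gen_complex (insert F S)) F" "facets (gen_complex (insert F S)) = insert F S"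
    "F \<notin> S"
  shows "\<exists>G\<in>S. gen_complex S \<inter> Pow F = Pow (G \<inter> F)"
proof -
  obtain G where G: "G \<in> insert F S" "G \<noteq> F" "\<forall>H\<in>insert F S. H \<noteq> F \<longrightarrow> H \<inter> F \<subseteq> G \<inter> F"
    using assms(1,2) unfolding is_leaf_def by auto
  have "gen_complex S \<inter> Pow F \<subseteq> Pow (G \<inter> F)"
  proof
    fix A assume "A \<in> gen_complex S \<inter> Pow F"
    then obtain H where "H \<in> S" "A \<subseteq> H" "A \<subseteq> F"
      unfolding gen_complex_def by auto
    moreover have "H \<inter> F \<subseteq> G \<inter> F"
      using G(3) \<open>H \<in> S\<close> assms(3) by auto
    ultimately show "A \<in> Pow (G \<inter> F)"
      by blast
  qed
  moreover have "G \<in> S"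
    using G(1,2) by simp
  moreover from this have "Pow (G \<inter> F) \<subseteq> gen_complex S \<inter> Pow F"
    unfolding gen_complex_def by auto
  ultimately show ?thesis
    by blast
qed

lemma leaf_order_face_poly:
  assumes "leaf_order L" "distinct L" "L \<noteq> []" "\<forall>F\<in>set L. finite F \<and> card F = d"
  shows "\<exists>M. (\<forall>a\<in>#M. a < d) \<and> face_poly (gen_complex (set L)) = glue_poly d M"
  using assms
proof (induction L rule: rev_induct)
  case Nil
  then show ?case
    by simp
next
  case (snoc F L)
  have F: "finite F" "card F = d"
    using snoc.prems(4) by auto
  show ?case
  proof (cases "L = []")
    case True
    have "gen_complex {F} = Pow F"
      unfolding gen_complex_def by auto
    then show ?thesis
      using True F by (intro exI[of _ "{#}"]) (simp add: face_poly_Pow glue_poly_def)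
  next
    case False
    obtain M where M: "\<forall>a\<in>#M. a < d" "face_poly (gen_complex (set L)) = glue_poly d M"
      using snoc.IH snoc.prems False by (auto simp: leaf_order_snoc)
    have leaf: "is_leaf (gen_complex (insert F (set L))) F"
      using snoc.prems(1) False by (simp add: leaf_order_snoc)
    have facets: "facets (gen_complex (insert F (set L))) = insert F (set L)"
      using snoc.prems(4) by (intro facets_gen_complex_card[of _ d]) simp
    have "F \<notin> set L"
      using snoc.prems(2) by simp
    then obtain G where G: "G \<in> set L" "gen_complex (set L) \<inter> Pow F = Pow (G \<inter> F)"
      using leaf_meets_rest_in_simplex[OF leaf facets] by blast
    have glue: "face_poly (gen_complex (insert F (set L))) =
        glue_poly d M + monom 1 d - monom 1 (card (G \<inter> F))"
      using face_poly_glue[of "set L" F] G(2) snoc.prems(4) F M(2) by simp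
    have "G \<noteq> F" "finite G" "card G = d"
      using G(1) snoc.prems(2,4) by auto
    then have "\<not> F \<subseteq> G"
      using F(2) card_subset_eq by metis
    then have "card (G \<inter> F) < d"
      using F psubset_card_mono[of F "G \<inter> F"] by blast
    then show ?thesis
      using M(1) glue
      by (intro exI[of _ "add_mset (card (G \<inter> F)) M"]) (simp add: glue_poly_add_mset)
  qed
qed

lemma pure_quasi_forest_face_poly:
  assumes "simplicial_complex n \<Delta>" "\<Delta> \<noteq> {}" "pure \<Delta>" "quasi_forest \<Delta>"
  shows "\<exists>M. (\<forall>a\<in>#M. a < max_face_card \<Delta>) \<and> face_poly \<Delta> = glue_poly (max_face_card \<Delta>) M"
proof -
  note fin = simplicial_complex_finite[OF assms(1)]
  obtain L where L: "distinct L" "set L = facets \<Delta>" "leaf_order L"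
    using assms(4) unfolding quasi_forest_iff_leaf_order by blast
  have "L \<noteq> []"
    using L(2) face_subset_facet[OF fin(1)] assms(2) by fastforce
  moreover have "\<forall>F\<in>set L. finite F \<and> card F = max_face_card \<Delta>"
    using L(2) fin assms(3) card_facet_pure unfolding facets_def by auto
  moreover have "gen_complex (set L) = \<Delta>"
    using L(2) gen_complex_facets fin(1) assms(1) unfolding simplicial_complex_def by metis
  ultimately show ?thesis
    using leaf_order_face_poly[OF L(3,1)] by metis
qed

section \<open>Forests glued along initial segments\<close>

lemma forest_gen_complex_initial_segments:
  fixes \<alpha> :: "nat set \<Rightarrow> nat"
  assumes antichain: "\<forall>F\<in>S. \<forall>G\<in>S. F \<subseteq> G \<longrightarrow> F = G"
    and inter: "\<forall>H\<in>S. \<forall>H'\<in>S. H \<noteq> H' \<longrightarrow> H \<inter> H' = {1..min (\<alpha> H) (\<alpha> H')}"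
  shows "forest (gen_complex S)"
proof -
  have "card (facets (gen_complex T)) = 1 \<or> (\<exists>F. is_leaf (gen_complex T) F)"
    if T: "T \<subseteq> S" "T \<noteq> {}" for T
  proof -
    have facets_T: "facets (gen_complex T) = T"
      using antichain T(1) by (intro facets_gen_complex) blast
    obtain H0 where "H0 \<in> T"
      using T(2) by blast
    then obtain F where F: "F \<in> T" "\<forall>H\<in>T. \<alpha> F \<le> \<alpha> H"
      using ex_has_least_nat[of "\<lambda>H. H \<in> T" H0 \<alpha>] by blast
    have meet_F: "H \<inter> F = {1..\<alpha> F}" if "H \<in> T" "H \<noteq> F" for H
      using inter T(1) F that by (simp add: subset_iff min_absorb2)
    show ?thesis
    proof (cases "T = {F}")
      case True
      then show ?thesis
        using facets_T by simp
    next
      case False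
      then obtain G where "G \<in> T" "G \<noteq> F"
        using F(1) by blast
      then have "\<forall>H\<in>T. H \<noteq> F \<longrightarrow> H \<inter> F \<subseteq> G \<inter> F"
        using meet_F by simp
      then have "is_leaf (gen_complex T) F"
        unfolding is_leaf_def facets_T using F(1) \<open>G \<in> T\<close> \<open>G \<noteq> F\<close> by blast
      then show ?thesis
        by blast
    qed
  qed
  then show ?thesis
    unfolding forest_def facets_gen_complex[OF antichain] by blast
qed

definition initial_segment_family :: "nat \<Rightarrow> nat \<Rightarrow> nat set set \<Rightarrow> (nat set \<Rightarrow> nat) \<Rightarrow> bool" where
  "initial_segment_family d n S \<alpha> \<longleftrightarrow>
     finite S \<and> {1..d} \<in> S \<and> \<Union>S = {1..n} \<and> (\<forall>H\<in>S. finite H \<and> card H = d) \<and>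
     (\<forall>H\<in>S. H \<inter> {1..d} = {1..\<alpha> H}) \<and> (\<forall>H\<in>S. \<forall>H'\<in>S. H \<noteq> H' \<longrightarrow> H \<inter> H' \<subseteq> {1..d})"

lemma initial_segment_family_base: "initial_segment_family d d {{1..d}} (\<lambda>_. d)"
  unfolding initial_segment_family_def by auto

lemma initial_segment_family_glue:
  assumes "initial_segment_family d n S \<alpha>" and "a < d"
  defines "F \<equiv> {1..a} \<union> {n + 1..n + (d - a)}"
  shows "initial_segment_family d (n + (d - a)) (insert F S) (\<alpha>(F := a))"
    and "gen_complex S \<inter> Pow F = Pow {1..a}"
proof -
  have S: "finite S" "{1..d} \<in> S" "\<Union>S = {1..n}" "\<forall>H\<in>S. finite H \<and> card H = d"
    "\<forall>H\<in>S. H \<inter> {1..d} = {1..\<alpha> H}" "\<forall>H\<in>S. \<forall>H'\<in>S. H \<noteq> H' \<longrightarrow> H \<inter> H' \<subseteq> {1..d}"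
    using assms(1) unfolding initial_segment_family_def by simp_all
  have "{1..d} \<subseteq> {1..n}"
    using S(2,3) by blast
  then have "d \<le> n"
    by (cases "d = 0") auto
  have S_vertices: "H \<subseteq> {1..n}" if "H \<in> S" for H
    using S(3) that by blast
  have "card F = d"
    using \<open>a < d\<close> \<open>d \<le> n\<close> unfolding F_def by (subst card_Un_disjoint) auto
  have "F \<notin> S"
    using S_vertices \<open>a < d\<close> unfolding F_def by fastforce
  have F_base: "F \<inter> {1..d} = {1..a}"
    using \<open>a < d\<close> \<open>d \<le> n\<close> unfolding F_def by auto
  have F_meet: "H \<inter> F \<subseteq> {1..a}" if "H \<in> S" for H
    using S_vertices[OF that] unfolding F_def by auto
  have "\<Union>(insert F S) = {1..n + (d - a)}"
    using S(3) \<open>a < d\<close> \<open>d \<le> n\<close> unfolding F_def by auto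
  moreover have "\<forall>H\<in>insert F S. H \<inter> {1..d} = {1..(\<alpha>(F := a)) H}"
    using S(5) F_base \<open>F \<notin> S\<close> by auto
  moreover have "\<forall>H\<in>insert F S. \<forall>H'\<in>insert F S. H \<noteq> H' \<longrightarrow> H \<inter> H' \<subseteq> {1..d}"
    using S(6) F_meet \<open>a < d\<close> by fastforce
  ultimately show "initial_segment_family d (n + (d - a)) (insert F S) (\<alpha>(F := a))"
    unfolding initial_segment_family_def using S(1,2,4) \<open>card F = d\<close> by (simp add: F_def)
  show "gen_complex S \<inter> Pow F = Pow {1..a}"
  proof
    show "gen_complex S \<inter> Pow F \<subseteq> Pow {1..a}"
      using F_meet unfolding gen_complex_def by blast
    show "Pow {1..a} \<subseteq> gen_complex S \<inter> Pow F"
    proof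
      fix A assume "A \<in> Pow {1..a}"
      then have "A \<subseteq> {1..d}" "A \<subseteq> F"
        using \<open>a < d\<close> unfolding F_def by auto
      then show "A \<in> gen_complex S \<inter> Pow F"
        using S(2) unfolding gen_complex_def by auto
    qed
  qed
qed

lemma exists_initial_segment_family:
  assumes "\<forall>a\<in>#M. a < d"
  shows "\<exists>n S \<alpha>. initial_segment_family d n S \<alpha> \<and> face_poly (gen_complex S) = glue_poly d M"
  using assms
proof (induction M)
  case empty
  have "gen_complex {{1..d}} = Pow {1..d}"
    unfolding gen_complex_def by auto
  then show ?case
    using initial_segment_family_base
    by (intro exI[of _ d] exI[of _ "{{1..d}}"] exI[of _ "\<lambda>_. d"]) (simp add: face_poly_Pow glue_poly_def)
next
  case (add a M)
  then have "a < d" "\<forall>a\<in>#M. a < d"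
    by simp_all
  then obtain n S \<alpha> where S: "initial_segment_family d n S \<alpha>" "face_poly (gen_complex S) = glue_poly d M"
    using add.IH by blast
  \<comment> \<open>glued to the base facet {1..d} along {1..a} and completed by d - a fresh vertices\<close>
  define F where "F = {1..a} \<union> {n + 1..n + (d - a)}"
  have family: "initial_segment_family d (n + (d - a)) (insert F S) (\<alpha>(F := a))"
    and inter: "gen_complex S \<inter> Pow F = Pow {1..a}"
    using initial_segment_family_glue[OF S(1) \<open>a < d\<close>] unfolding F_def by blast+
  have "finite S" "\<forall>H\<in>S. finite H" "finite F" "card F = d"
    using S(1) family unfolding initial_segment_family_def by simp_all
  then have "face_poly (gen_complex (insert F S)) = glue_poly d M + monom 1 d - monom 1 a"
    using face_poly_glue[OF _ _ _ inter] S(2) by simp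
  then have "face_poly (gen_complex (insert F S)) = glue_poly d (add_mset a M)"
    by (simp add: glue_poly_add_mset)
  with family show ?case
    by (intro exI[of _ "n + (d - a)"] exI[of _ "insert F S"] exI[of _ "\<alpha>(F := a)"] conjI)
qed

lemma initial_segment_family_inter:
  assumes "initial_segment_family d n S \<alpha>" "H \<in> S" "H' \<in> S" "H \<noteq> H'"
  shows "H \<inter> H' = {1..min (\<alpha> H) (\<alpha> H')}"
proof -
  have "H \<inter> H' \<subseteq> {1..d}"
    using assms unfolding initial_segment_family_def by simp
  then have "H \<inter> H' = (H \<inter> {1..d}) \<inter> (H' \<inter> {1..d})"
    by auto
  then show ?thesis
    using assms unfolding initial_segment_family_def by simp
qed

lemma max_face_card_gen_complex:
  assumes "finite S" "S \<noteq> {}" "\<forall>H\<in>S. finite H \<and> card H = d"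
  shows "max_face_card (gen_complex S) = d"
  unfolding max_face_card_def
proof (rule Max_eqI)
  have "\<forall>H\<in>S. finite H"
    using assms(3) by blast
  then show "finite (card ` gen_complex S)"
    using finite_gen_complex assms(1) by blast
  obtain H where "H \<in> S"
    using assms(2) by blast
  then have "H \<in> gen_complex S" "card H = d"
    using assms(3) unfolding gen_complex_def by auto
  then show "d \<in> card ` gen_complex S"
    by force
next
  fix k assume "k \<in> card ` gen_complex S"
  then obtain A H where "k = card A" "H \<in> S" "A \<subseteq> H"
    unfolding gen_complex_def by blast
  then show "k \<le> d"
    using assms(3) card_mono by metis
qed

lemma exists_pure_forest_glue_poly:
  assumes "\<forall>a\<in>#M. a < d"
  shows "\<exists>n \<Delta>. simplicial_complex n \<Delta> \<and> \<Delta> \<noteq> {} \<and> pure \<Delta> \<and> forest \<Delta> \<and>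
    max_face_card \<Delta> = d \<and> face_poly \<Delta> = glue_poly d M"
proof -
  obtain n S \<alpha> where family: "initial_segment_family d n S \<alpha>"
    and S_poly: "face_poly (gen_complex S) = glue_poly d M"
    using exists_initial_segment_family[OF assms] by blast
  then have S: "finite S" "{1..d} \<in> S" "\<Union>S = {1..n}" "\<forall>H\<in>S. finite H \<and> card H = d"
    unfolding initial_segment_family_def by simp_all
  have facets: "facets (gen_complex S) = S"
    using S(4) by (rule facets_gen_complex_card)
  have "forest (gen_complex S)"
  proof (rule forest_gen_complex_initial_segments)
    show "\<forall>F\<in>S. \<forall>G\<in>S. F \<subseteq> G \<longrightarrow> F = G"
      using S(4) by (metis card_subset_eq)
    show "\<forall>H\<in>S. \<forall>H'\<in>S. H \<noteq> H' \<longrightarrow> H \<inter> H' = {1..min (\<alpha> H) (\<alpha> H')}"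
      using initial_segment_family_inter[OF family] by blast
  qed
  moreover have "pure (gen_complex S)"
    unfolding pure_def facets using S(4) by simp
  moreover have "gen_complex S \<noteq> {}"
    using S(2) unfolding gen_complex_def by blast
  moreover have "max_face_card (gen_complex S) = d"
    using max_face_card_gen_complex S(1,2,4) by blast
  ultimately show ?thesis
    using simplicial_complex_gen_complex[OF S(3)] S_poly
    by (intro exI[of _ n] exI[of _ "gen_complex S"]) simp
qed

lemma realizes_iff_face_poly:
  assumes "simplicial_complex n \<Delta>" "\<Delta> \<noteq> {}"
  shows "realizes d f \<Delta> \<longleftrightarrow> max_face_card \<Delta> = d \<and> face_poly \<Delta> = c_poly d f"
proof (cases "max_face_card \<Delta> = d")
  case True
  note fin = simplicial_complex_finite[OF assms(1)]
  obtain A where "A \<in> \<Delta>"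
    using assms(2) by blast
  then have "{} \<in> \<Delta>"
    using assms(1) by (meson empty_subsetI simplicial_complex_def)
  moreover have "\<forall>A\<in>\<Delta>. card A \<le> d"
    using fin(1) True unfolding max_face_card_def by auto
  ultimately have "face_poly \<Delta> = c_poly d (\<lambda>i. int (fnum \<Delta> i))"
    using face_poly_eq_c_poly_fnum fin by blast
  then show ?thesis
    unfolding realizes_def using True c_poly_eq_iff[of d _ f] by simp
qed (simp add: realizes_def)

theorem theorem1p2:
  fixes d :: nat and f :: "nat \<Rightarrow> int"
  assumes "d \<ge> 1" and "\<forall>i<d. f i > 0"
  shows "((\<exists>n \<Delta>. simplicial_complex n \<Delta> \<and> pure \<Delta> \<and> quasi_forest \<Delta> \<and> realizes d f \<Delta>)
           \<longleftrightarrow> (\<exists>n \<Delta>. simplicial_complex n \<Delta> \<and> pure \<Delta> \<and> forest \<Delta> \<and> realizes d f \<Delta>))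
       \<and> ((\<exists>n \<Delta>. simplicial_complex n \<Delta> \<and> pure \<Delta> \<and> forest \<Delta> \<and> realizes d f \<Delta>)
           \<longleftrightarrow> ((\<forall>k\<in>{1..d}. (\<Sum>i = k..d. coeff (c_poly d f) i) > 0) \<and>
                (\<forall>i. 1 \<le> i \<and> i < d \<longrightarrow> coeff (c_poly d f) i \<le> 0)))
       \<and> (((\<forall>k\<in>{1..d}. (\<Sum>i = k..d. coeff (c_poly d f) i) > 0) \<and>
                (\<forall>i. 1 \<le> i \<and> i < d \<longrightarrow> coeff (c_poly d f) i \<le> 0))
           \<longleftrightarrow> (0 < coeff (b_poly d f) 0 \<and>
                (\<forall>i. 1 \<le> i \<and> i < d \<longrightarrow> coeff (b_poly d f) (i - 1) \<le> coeff (b_poly d f) i)))"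
proof -
  let ?quasi_forest = "\<exists>n \<Delta>. simplicial_complex n \<Delta> \<and> pure \<Delta> \<and> quasi_forest \<Delta> \<and> realizes d f \<Delta>"
  let ?forest = "\<exists>n \<Delta>. simplicial_complex n \<Delta> \<and> pure \<Delta> \<and> forest \<Delta> \<and> realizes d f \<Delta>"
  let ?c_conditions = "(\<forall>k\<in>{1..d}. (\<Sum>i = k..d. coeff (c_poly d f) i) > 0) \<and>
    (\<forall>i. 1 \<le> i \<and> i < d \<longrightarrow> coeff (c_poly d f) i \<le> 0)"
  have c_conditions_iff: "?c_conditions \<longleftrightarrow> (\<exists>M. (\<forall>a\<in>#M. a < d) \<and> c_poly d f = glue_poly d M)"
    using glue_poly_iff_coeff_conditions[OF assms(1) degree_c_poly_le poly_c_poly_1] by simp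
  have "?c_conditions" if ?quasi_forest
  proof -
    obtain n \<Delta> where \<Delta>: "simplicial_complex n \<Delta>" "pure \<Delta>" "quasi_forest \<Delta>" "realizes d f \<Delta>"
      using \<open>?quasi_forest\<close> by blast
    have "\<Delta> \<noteq> {}"
      using \<Delta>(4) assms unfolding realizes_def fnum_def by fastforce
    then have "max_face_card \<Delta> = d" "face_poly \<Delta> = c_poly d f"
      using realizes_iff_face_poly[OF \<Delta>(1)] \<Delta>(4) by auto
    then show ?thesis
      using pure_quasi_forest_face_poly[OF \<Delta>(1) \<open>\<Delta> \<noteq> {}\<close> \<Delta>(2,3)] c_conditions_iff by auto
  qed
  moreover have "?forest" if ?c_conditions
  proof -
    obtain M where "\<forall>a\<in>#M. a < d" "c_poly d f = glue_poly d M"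
      using \<open>?c_conditions\<close> c_conditions_iff by blast
    then show ?forest
      using exists_pure_forest_glue_poly realizes_iff_face_poly by metis
  qed
  moreover have "?quasi_forest" if ?forest
    using \<open>?forest\<close> forest_imp_quasi_forest simplicial_complex_finite(1) by blast
  ultimately show ?thesis
    using c_poly_conditions_iff_b_poly_mono[OF assms(1)] by blast
qed

end
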